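(* Let $f$ be a transcendental entire function, $f_n(z):=f(nz)/n$, and let $(f_{n_k})$ be a subsequence and $0<s<1$ such that $f_{n_k}\to\infty$ uniformly on compact subsets of $\mathbb D_s\setminus\{0\}$. Let $0<r<s$, $R>0$ and $m\in\mathbb N$. Then there exists $k_0$ such that for all $k>k_0$: (1) $|f_{n_k}(z)|>R$ for every $z\in\partial\mathbb D_r$; and (2) the winding number of the closed curve $f_{n_k}(\partial\mathbb D_r)$ around $0$ is at least $m$.
   Context: $\mathbb D_r$ denotes the open Euclidean disk of radius $r$ centered at $0$. *)

theory Defs
  imports "HOL-Complex_Analysis.Complex_Analysis" "HOL-Computational_Algebra.Polynomial"
begin

definition transcendental_entire :: "(complex \<Rightarrow> complex) \<Rightarrow> bool" where
  "transcendental_entire f \<longleftrightarrow> f holomorphic_on UNIV \<and> \<not> (\<exists>p. \<forall>z. f z = poly p z)"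

definition rescale :: "(complex \<Rightarrow> complex) \<Rightarrow> nat \<Rightarrow> complex \<Rightarrow> complex" where
  "rescale f n z = f (of_nat n * z) / of_nat n"

definition tends_to_infinity_locally_uniformly ::
    "(nat \<Rightarrow> complex \<Rightarrow> complex) \<Rightarrow> complex set \<Rightarrow> bool" where
  "tends_to_infinity_locally_uniformly F U \<longleftrightarrow>
     (\<forall>K. compact K \<and> K \<subseteq> U \<longrightarrow>
        (\<forall>M::real. \<exists>N. \<forall>k\<ge>N. \<forall>z\<in>K. norm (F k z) > M))"

end

theory Submission imports Defs begin

text \<open>
  For large \<open>k\<close> the function \<open>f_(n_k)\<close> exceeds \<open>max R 1\<close> on the circle \<open>|z| = r\<close>,
  which gives (1) and also \<open>|f| > n_k\<close> on the circles \<open>|w| = n_k r\<close>. By the argument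
  principle the winding number in (2) is at least the number of zeros of \<open>f_(n_k)\<close> in the disk of
  radius \<open>r\<close>, i.e. of \<open>f\<close> in the disk of radius \<open>n_k r\<close>. If (2) failed for infinitely many \<open>k\<close>,
  \<open>f\<close> would have fewer than \<open>m\<close> zeros in arbitrarily large disks, hence finitely many zeros.
  Then \<open>1/f\<close> is holomorphic on the annuli between the circles \<open>|w| = n_k r\<close>, and the maximum
  principle on them gives \<open>1/f \<rightarrow> 0\<close> at infinity, so \<open>f\<close> would be a polynomial.
\<close>

lemma entire_finite_zeros_in_cball:
  fixes h :: "complex \<Rightarrow> complex"
  assumes "h holomorphic_on UNIV" and "h a \<noteq> 0"
  shows "finite {z\<in>cball c \<rho>. h z = 0}"
proof (cases "h constant_on UNIV")
  case True
  with \<open>h a \<noteq> 0\<close> have "{z\<in>cball c \<rho>. h z = 0} = {}"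
    by (auto simp: constant_on_def)
  then show ?thesis by (metis finite.emptyI)
next
  case False
  then show ?thesis
    by (intro holomorphic_compact_finite_zeros[OF assms(1)]) auto
qed

lemma winding_number_image_circlepath_eq_sum_zorder:
  fixes h :: "complex \<Rightarrow> complex"
  assumes holo: "h holomorphic_on UNIV" and "r > 0" and nz: "\<forall>z\<in>sphere c r. h z \<noteq> 0"
  shows "finite {z\<in>ball c r. h z = 0}"
    and "winding_number (h \<circ> circlepath c r) 0 = of_int (\<Sum>p\<in>{z\<in>ball c r. h z = 0}. zorder h p)"
proof -
  define S where "S = ball c (r + 1)"
  define pz where "pz = {w\<in>S. h w = 0}"
  define Z where "Z = {z\<in>ball c r. h z = 0}"
  let ?g = "circlepath c r"
  have pimg: "path_image ?g = sphere c r"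
    using \<open>r > 0\<close> by simp
  have outside: "winding_number ?g z = 0" if "z \<notin> cball c r" for z
    using that by (intro winding_number_zero_outside[of _ "cball c r"]) (use pimg in auto)
  have "h (c + of_real r) \<noteq> 0"
    using nz \<open>r > 0\<close> by (auto simp: dist_norm)
  then have "finite {z\<in>cball c (r + 1). h z = 0}"
    by (rule entire_finite_zeros_in_cball[OF holo])
  then have finpz: "finite pz"
    unfolding pz_def S_def by (rule finite_subset[rotated]) auto
  then show "finite Z"
    unfolding pz_def Z_def S_def by (rule finite_subset[rotated]) auto
  have "contour_integral ?g (\<lambda>x. deriv h x * 1 / h x) =
      2 * pi * \<i> * (\<Sum>p\<in>pz. winding_number ?g p * 1 * zorder h p)"
  proof -
    have "path_image ?g \<subseteq> S - {w\<in>S. h w = 0 \<or> w \<in> {}}"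
      using pimg nz \<open>r > 0\<close> unfolding S_def by (auto simp: dist_norm)
    moreover have "\<forall>z. z \<notin> S \<longrightarrow> winding_number ?g z = 0"
      using outside unfolding S_def by auto
    ultimately show ?thesis
      using argument_principle[of S h "{}" "\<lambda>_. 1" ?g] finpz holo
      unfolding pz_def S_def by (auto intro: holomorphic_on_subset)
  qed
  moreover have "winding_number (h \<circ> ?g) 0 = contour_integral ?g (\<lambda>x. deriv h x * 1 / h x) / (2 * pi * \<i>)"
  proof -
    have "winding_number (h \<circ> ?g) 0 = 1 / (2 * pi * \<i>) * contour_integral (h \<circ> ?g) (\<lambda>w. 1 / (w - 0))"
      using nz pimg
      by (intro winding_number_valid_path valid_path_compose_holomorphic[OF valid_path_circlepath holo])
         (auto simp: path_image_compose)
    also have "contour_integral (h \<circ> ?g) (\<lambda>w. 1 / (w - 0)) = contour_integral ?g (\<lambda>x. deriv h x * 1 / h x)"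
      using holo by (subst contour_integral_comp_analyticW[where s = UNIV]) (auto simp: analytic_on_open)
    finally show ?thesis by (simp add: o_def)
  qed
  moreover have "(\<Sum>p\<in>pz. winding_number ?g p * 1 * zorder h p) = (\<Sum>p\<in>Z. of_int (zorder h p))"
  proof (rule sum.mono_neutral_cong_right[OF finpz])
    show "Z \<subseteq> pz" unfolding Z_def pz_def S_def by auto
    show "\<forall>p\<in>pz - Z. winding_number ?g p * 1 * of_int (zorder h p) = 0"
      using nz outside unfolding pz_def Z_def by (force simp: dist_commute order_le_less)
    show "winding_number ?g p * 1 * of_int (zorder h p) = of_int (zorder h p)" if "p \<in> Z" for p
      using that winding_number_circlepath[of p c r] unfolding Z_def by (auto simp: dist_norm norm_minus_commute)
  qed
  ultimately show "winding_number (h \<circ> ?g) 0 = of_int (\<Sum>p\<in>Z. zorder h p)"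
    by simp
qed

lemma winding_number_image_circlepath_ge_card_zeros:
  fixes h :: "complex \<Rightarrow> complex"
  assumes holo: "h holomorphic_on UNIV" and "r > 0" and nz: "\<forall>z\<in>sphere c r. h z \<noteq> 0"
  obtains w :: int where "winding_number (h \<circ> circlepath c r) 0 = of_int w"
    and "int (card {z\<in>ball c r. h z = 0}) \<le> w"
proof
  let ?Z = "{z\<in>ball c r. h z = 0}"
  show "winding_number (h \<circ> circlepath c r) 0 = of_int (\<Sum>p\<in>?Z. zorder h p)"
    by (rule winding_number_image_circlepath_eq_sum_zorder(2)[OF assms])
  have "\<exists>w\<in>UNIV. h w \<noteq> 0"
    using nz \<open>r > 0\<close> by (intro bexI[of _ "c + of_real r"]) (auto simp: dist_norm)
  then have "1 \<le> zorder h p" if "h p = 0" for p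
    using conjunct1[OF zorder_exist_zero[OF holo open_UNIV connected_UNIV UNIV_I, of p]] that by simp
  then have "(\<Sum>p\<in>?Z. 1) \<le> (\<Sum>p\<in>?Z. zorder h p)"
    by (intro sum_mono) auto
  then show "int (card ?Z) \<le> (\<Sum>p\<in>?Z. zorder h p)"
    by simp
qed

lemma finite_if_card_bounded_on_large_balls:
  fixes Z :: "'a::metric_space set"
  assumes "\<And>\<rho>0. \<exists>\<rho>\<ge>\<rho>0. finite (Z \<inter> ball c \<rho>) \<and> card (Z \<inter> ball c \<rho>) \<le> m"
  shows "finite Z"
proof -
  have "card G \<le> m" if "G \<subseteq> Z" "finite G" for G
  proof -
    obtain \<rho>0 where "G \<subseteq> ball c \<rho>0"
      using \<open>finite G\<close> finite_imp_bounded bounded_subset_ballD by blast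
    moreover obtain \<rho> where "\<rho> \<ge> \<rho>0" "finite (Z \<inter> ball c \<rho>)" "card (Z \<inter> ball c \<rho>) \<le> m"
      using assms by blast
    ultimately have "card G \<le> card (Z \<inter> ball c \<rho>)"
      using \<open>G \<subseteq> Z\<close> by (intro card_mono) auto
    with \<open>card (Z \<inter> ball c \<rho>) \<le> m\<close> show ?thesis by simp
  qed
  then show ?thesis
    using finite_if_finite_subsets_card_bdd by blast
qed

lemma norm_le_on_annulus:
  fixes g :: "complex \<Rightarrow> complex"
  assumes holo: "g holomorphic_on cball c b - ball c a" and "a > 0"
    and bound: "\<forall>z\<in>sphere c a \<union> sphere c b. norm (g z) \<le> B"
    and z: "z \<in> cball c b - ball c a"
  shows "norm (g z) \<le> B"
proof (rule maximum_modulus_frontier[of g "cball c b - ball c a"])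
  have closed: "closure (cball c b - ball c a) = cball c b - ball c a"
    by (intro closure_closed) auto
  have interior: "interior (cball c b - ball c a) = ball c b - cball c a"
    using \<open>a > 0\<close> by (simp add: interior_diff)
  show "g holomorphic_on interior (cball c b - ball c a)"
    using holo interior_subset by (rule holomorphic_on_subset)
  show "continuous_on (closure (cball c b - ball c a)) g"
    unfolding closed using holo by (rule holomorphic_on_imp_continuous_on)
  show "norm (g w) \<le> B" if "w \<in> frontier (cball c b - ball c a)" for w
    using that bound unfolding frontier_def closed interior by auto
qed (use z in auto)

lemma entire_is_poly_if_large_on_circles:
  fixes f :: "complex \<Rightarrow> complex"
  assumes holo: "f holomorphic_on UNIV" and fin: "finite {z. f z = 0}"
    and large: "\<And>M \<rho>0. \<exists>\<rho>\<ge>\<rho>0. \<forall>z\<in>sphere 0 \<rho>. norm (f z) > M"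
  shows "\<exists>p. \<forall>z. f z = poly p z"
proof -
  obtain \<rho>0 where \<rho>0: "{z. f z = 0} \<subseteq> ball 0 \<rho>0" "\<rho>0 > 0"
    using fin finite_imp_bounded bounded_subset_ballD bounded_subset_ballI by metis
  have "((inverse \<circ> f) \<longlongrightarrow> 0) at_infinity"
    unfolding Lim_at_infinity
  proof (intro allI impI)
    fix e :: real assume "e > 0"
    have small: "norm (inverse (f z)) \<le> e / 2" if "norm (f z) > 2 / e" for z
    proof -
      have "inverse (norm (f z)) \<le> inverse (2 / e)"
        using that \<open>e > 0\<close> by (intro le_imp_inverse_le) auto
      then show ?thesis by (simp add: norm_inverse)
    qed
    obtain a where a: "a \<ge> \<rho>0" "\<forall>z\<in>sphere 0 a. norm (f z) > 2 / e"
      using large by blast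
    have "dist ((inverse \<circ> f) x) 0 < e" if "norm x \<ge> a" for x
    proof -
      obtain b where b: "b \<ge> norm x" "\<forall>z\<in>sphere 0 b. norm (f z) > 2 / e"
        using large by blast
      have "f z \<noteq> 0" if "z \<in> cball 0 b - ball 0 a" for z
        using that a(1) \<rho>0(1) by fastforce
      then have "(\<lambda>z. inverse (f z)) holomorphic_on cball 0 b - ball 0 a"
        by (intro holomorphic_intros holomorphic_on_subset[OF holo]) auto
      then have "norm (inverse (f x)) \<le> e / 2"
        using a b \<open>norm x \<ge> a\<close> \<rho>0(2) small by (intro norm_le_on_annulus[of _ 0 b a]) auto
      with \<open>e > 0\<close> show ?thesis by simp
    qed
    then show "\<exists>b. \<forall>x. b \<le> norm x \<longrightarrow> dist ((inverse \<circ> f) x) 0 < e" by blast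
  qed
  then obtain c n where "\<And>z. f z = (\<Sum>i\<le>n. c i * z ^ i)"
    using pole_at_infinity[OF holo] by blast
  then have "\<forall>z. f z = poly (\<Sum>i\<le>n. monom (c i) i) z"
    by (simp add: poly_sum poly_monom)
  then show ?thesis by blast
qed

lemma rescale_holomorphic:
  assumes "f holomorphic_on UNIV"
  shows "rescale f n holomorphic_on UNIV"
proof -
  have "(f \<circ> (\<lambda>z. of_nat n * z)) holomorphic_on UNIV"
    by (rule holomorphic_on_compose) (auto intro: holomorphic_on_subset[OF assms])
  then show ?thesis
    unfolding rescale_def o_def by (intro holomorphic_intros) auto
qed

lemma zeros_rescale:
  assumes "n > 0"
  shows "{w\<in>ball 0 (real n * r). f w = 0} = (\<lambda>z. of_nat n * z) ` {z\<in>ball 0 r. rescale f n z = 0}"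
proof (intro equalityI subsetI)
  fix w assume w: "w \<in> {w\<in>ball 0 (real n * r). f w = 0}"
  have "w = of_nat n * (w / of_nat n)" using assms by simp
  moreover have "w / of_nat n \<in> {z\<in>ball 0 r. rescale f n z = 0}"
    using w assms by (auto simp: rescale_def norm_divide field_simps)
  ultimately show "w \<in> (\<lambda>z. of_nat n * z) ` {z\<in>ball 0 r. rescale f n z = 0}" by blast
qed (use assms in \<open>auto simp: rescale_def norm_mult\<close>)

lemma winding_number_rescale_ge_card_zeros:
  fixes n :: nat
  assumes holo: "f holomorphic_on UNIV" and "n > 0" and "r > 0"
    and nz: "\<forall>z\<in>sphere 0 r. rescale f n z \<noteq> 0"
  obtains w :: int where "winding_number (rescale f n \<circ> circlepath 0 r) 0 = of_int w"
    and "finite {z\<in>ball 0 (real n * r). f z = 0}"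
    and "int (card {z\<in>ball 0 (real n * r). f z = 0}) \<le> w"
proof -
  let ?Z = "{z\<in>ball 0 r. rescale f n z = 0}"
  have "inj_on (\<lambda>z. of_nat n * z) ?Z"
    using \<open>n > 0\<close> by (auto simp: inj_on_def)
  then have "card {z\<in>ball 0 (real n * r). f z = 0} = card ?Z"
    unfolding zeros_rescale[OF \<open>n > 0\<close>] by (rule card_image)
  moreover have "finite {z\<in>ball 0 (real n * r). f z = 0}"
    unfolding zeros_rescale[OF \<open>n > 0\<close>]
    using winding_number_image_circlepath_eq_sum_zorder(1)[OF rescale_holomorphic[OF holo] \<open>r > 0\<close> nz]
    by blast
  moreover obtain w :: int where "winding_number (rescale f n \<circ> circlepath 0 r) 0 = of_int w"
      "int (card ?Z) \<le> w"
    using winding_number_image_circlepath_ge_card_zeros[OF rescale_holomorphic[OF holo] \<open>r > 0\<close> nz] .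
  ultimately show ?thesis
    using that by simp
qed

lemma strict_mono_radius_ge:
  fixes nk :: "nat \<Rightarrow> nat"
  assumes "strict_mono nk" and "r > 0" and "\<rho> / r < real k"
  shows "\<rho> \<le> real (nk k) * r"
proof -
  have "\<rho> \<le> real k * r" using assms(2,3) by (simp add: field_simps)
  also have "\<dots> \<le> real (nk k) * r"
    using strict_mono_imp_increasing[OF assms(1), of k] assms(2) by simp
  finally show ?thesis .
qed

lemma rescale_large_on_circle_imp_large_on_circles:
  fixes nk :: "nat \<Rightarrow> nat" and N :: nat
  assumes "strict_mono nk" and "r > 0"
    and large: "\<And>k z. k \<ge> N \<Longrightarrow> z \<in> sphere 0 r \<Longrightarrow> norm (rescale f (nk k) z) > 1"
  shows "\<exists>\<rho>\<ge>\<rho>0. \<forall>w\<in>sphere 0 \<rho>. norm (f w) > M"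
proof -
  obtain k where k: "real k > max (max M (\<rho>0 / r)) (real N + 1)"
    using reals_Archimedean2 by blast
  have "real k \<le> real (nk k)"
    using strict_mono_imp_increasing[OF \<open>strict_mono nk\<close>] by simp
  with k have nk: "real (nk k) > M" "nk k > 0" "k \<ge> N"
    by auto
  have "\<rho>0 \<le> real (nk k) * r"
    using k by (intro strict_mono_radius_ge[OF assms(1,2)]) auto
  have "norm (f w) > M" if "w \<in> sphere 0 (real (nk k) * r)" for w
  proof -
    have "w / of_nat (nk k) \<in> sphere 0 r"
      using that nk by (simp add: norm_divide)
    then have "norm (f w) / real (nk k) > 1"
      using large[OF \<open>k \<ge> N\<close>] nk by (fastforce simp: rescale_def norm_divide)
    with nk show ?thesis by (simp add: field_simps)
  qed
  with \<open>\<rho>0 \<le> real (nk k) * r\<close> show ?thesis by blast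
qed

lemma finite_zeros_if_rescale_windings_bounded:
  fixes nk :: "nat \<Rightarrow> nat" and N m :: nat
  assumes holo: "f holomorphic_on UNIV" and "strict_mono nk" and "r > 0"
    and nz: "\<And>k z. k \<ge> N \<Longrightarrow> z \<in> sphere 0 r \<Longrightarrow> rescale f (nk k) z \<noteq> 0"
    and few_windings: "\<And>k1. \<exists>k>k1. \<forall>w::int.
           winding_number (rescale f (nk k) \<circ> circlepath 0 r) 0 = of_int w \<longrightarrow> w < int m"
  shows "finite {z. f z = 0}"
proof (rule finite_if_card_bounded_on_large_balls)
  fix \<rho>0 :: real
  obtain k where k: "k > max N (nat \<lceil>\<rho>0 / r\<rceil>)" and
      bound: "\<And>w. winding_number (rescale f (nk k) \<circ> circlepath 0 r) 0 = of_int w \<Longrightarrow> w < int m"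
    using few_windings by blast
  have "nk k > 0"
    using k strict_mono_imp_increasing[OF \<open>strict_mono nk\<close>, of k] by simp
  have "\<rho>0 \<le> real (nk k) * r"
    using k by (intro strict_mono_radius_ge[OF \<open>strict_mono nk\<close> \<open>r > 0\<close>]) linarith
  obtain w :: int where "winding_number (rescale f (nk k) \<circ> circlepath 0 r) 0 = of_int w"
      "finite {z\<in>ball 0 (real (nk k) * r). f z = 0}" "int (card {z\<in>ball 0 (real (nk k) * r). f z = 0}) \<le> w"
    using winding_number_rescale_ge_card_zeros[OF holo \<open>nk k > 0\<close> \<open>r > 0\<close>] nz k by auto
  moreover have "{z. f z = 0} \<inter> ball 0 (real (nk k) * r) = {z\<in>ball 0 (real (nk k) * r). f z = 0}"
    by auto
  ultimately show "\<exists>\<rho>\<ge>\<rho>0. finite ({z. f z = 0} \<inter> ball 0 \<rho>) \<and> card ({z. f z = 0} \<inter> ball 0 \<rho>) \<le> m"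
    using \<open>\<rho>0 \<le> real (nk k) * r\<close> bound by (intro exI[of _ "real (nk k) * r"]) fastforce
qed

theorem mainTheorem7:
  fixes f :: "complex \<Rightarrow> complex" and nk :: "nat \<Rightarrow> nat"
    and s r R :: real and m :: nat
  assumes "transcendental_entire f"
    and "strict_mono nk"
    and "0 < s" and "s < 1"
    and "tends_to_infinity_locally_uniformly (\<lambda>k. rescale f (nk k)) (ball 0 s - {0})"
    and "0 < r" and "r < s" and "R > 0"
  shows "\<exists>k0. \<forall>k>k0.
           (\<forall>z\<in>sphere 0 r. norm (rescale f (nk k) z) > R) \<and>
           (\<exists>w::int. winding_number (rescale f (nk k) \<circ> circlepath 0 r) 0 = of_int w
                     \<and> w \<ge> int m)"
proof -
  have holo: "f holomorphic_on UNIV" and not_poly: "\<not> (\<exists>p. \<forall>z. f z = poly p z)"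
    using assms(1) unfolding transcendental_entire_def by auto
  have "compact (sphere (0::complex) r)" "sphere (0::complex) r \<subseteq> ball 0 s - {0}"
    using \<open>0 < r\<close> \<open>r < s\<close> by auto
  then obtain N where N: "\<And>k z. k \<ge> N \<Longrightarrow> z \<in> sphere 0 r \<Longrightarrow> norm (rescale f (nk k) z) > max R 1"
    using assms(5) unfolding tends_to_infinity_locally_uniformly_def by meson
  have "\<exists>k1. \<forall>k>k1. \<exists>w::int. winding_number (rescale f (nk k) \<circ> circlepath 0 r) 0 = of_int w \<and> w \<ge> int m"
  proof (rule ccontr)
    assume "\<not> ?thesis"
    then have "finite {z. f z = 0}"
      using N \<open>0 < r\<close> \<open>R > 0\<close>
      by (intro finite_zeros_if_rescale_windings_bounded[OF holo assms(2), of r N]) (force simp: not_le)+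
    moreover have "\<exists>\<rho>\<ge>\<rho>0. \<forall>w\<in>sphere 0 \<rho>. norm (f w) > M" for \<rho>0 M
      using N \<open>0 < r\<close> by (intro rescale_large_on_circle_imp_large_on_circles[OF assms(2)]) force+
    ultimately show False
      using entire_is_poly_if_large_on_circles[OF holo] not_poly by blast
  qed
  then obtain k1 where "\<forall>k>k1. \<exists>w::int. winding_number (rescale f (nk k) \<circ> circlepath 0 r) 0 = of_int w \<and> w \<ge> int m"
    by blast
  with N show ?thesis
    by (intro exI[of _ "max k1 N"]) force
qed

end
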